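(* Let $t\geq 4$ with $t\equiv 0\pmod 4$. Then the multiset $\{1,2^b,t^c\}$ admits a linear realization for every integer $b\geq t-2$ and every positive odd integer $c$.
   Context: $\{1,2^b,t^{c}\}$ is the multiset with one $1$, $b$ copies of $2$ and $c$ copies of $t$. For a multiset $L$ of positive integers with $|L|=v-1$, each at most $v-1$, a linear realization of $L$ is a Hamiltonian path $[x_0,\dots,x_{v-1}]$ of the complete graph on $\{0,\dots,v-1\}$ such that the multiset $\{|x_i-x_{i+1}| : i=0,\dots,v-2\}$ equals $L$. *)

theory Defs
  imports Main "HOL-Library.Multiset"
begin

text \<open>A Hamiltonian path of the complete graph on {0..v-1} is a list listing every vertex
exactly once. Its edge-length multiset collects |x_i - x_(i+1)|.\<close>

definition ham_path :: "nat \<Rightarrow> nat list \<Rightarrow> bool" where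
  "ham_path v xs \<longleftrightarrow> distinct xs \<and> set xs = {0..<v}"

definition edge_lengths :: "nat list \<Rightarrow> nat multiset" where
  "edge_lengths xs = mset (map (\<lambda>i. if xs ! i \<le> xs ! Suc i then xs ! Suc i - xs ! i
                                   else xs ! i - xs ! Suc i) [0..<length xs - 1])"

definition linear_realization :: "nat multiset \<Rightarrow> nat list \<Rightarrow> bool" where
  "linear_realization L xs \<longleftrightarrow>
     (let v = size L + 1 in
       (\<forall>l \<in># L. 0 < l \<and> l \<le> v - 1) \<and> ham_path v xs \<and> edge_lengths xs = L)"

definition has_linear_realization :: "nat multiset \<Rightarrow> bool" where
  "has_linear_realization L \<longleftrightarrow> (\<exists>xs. linear_realization L xs)"

definition ms_1_2_t :: "nat \<Rightarrow> nat \<Rightarrow> nat \<Rightarrow> nat multiset" where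
  "ms_1_2_t b t c = {#1#} + replicate_mset b 2 + replicate_mset c t"

end

theory Submission
  imports Defs
begin

(* Let v = t + c. The points of [0..<v] fall into t residue classes mod t, each an arithmetic
   progression of difference t. A snake traverses a sequence of classes alternately upwards and
   downwards; if consecutive classes are joined by edges of length 2, it uses only the lengths t
   and 2. Since t = 0 (mod 4) and v mod t = c mod t is odd, the even and the odd residues can each
   be ordered so that all joins have length 2, the even snake ending in 0 and the odd snake
   starting in 1: consecutive residues differ by 2, and at the tops of the classes the residues
   stay on one side of v mod t, except for one wrap-around from t - 2 to 0 (c = 1 mod 4) or from
   1 to t - 1 (c = 3 mod 4). Shifting both snakes up by k = b - (t - 2) and putting in between a
   zigzag through 0, ..., k + 1 from k to k + 1, whose edges are one 1 and k 2s, yields a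
   Hamiltonian path with c edges t, t - 2 + k = b edges 2 and one edge 1. *)

lemma replicate_mset_add: "replicate_mset (m + n) x = replicate_mset m x + replicate_mset n x"
  by (induction m) simp_all

definition nat_dist :: "nat \<Rightarrow> nat \<Rightarrow> nat" where
  "nat_dist a b = (if a \<le> b then b - a else a - b)"

lemma nat_dist_commute: "nat_dist a b = nat_dist b a"
  by (simp add: nat_dist_def)

lemma edge_lengths_Nil [simp]: "edge_lengths [] = {#}"
  and edge_lengths_singleton [simp]: "edge_lengths [a] = {#}"
  by (simp_all add: edge_lengths_def)

lemma edge_lengths_Cons_Cons [simp]:
  "edge_lengths (a # b # xs) = add_mset (nat_dist a b) (edge_lengths (b # xs))"
proof -
  have "[0..<length (a # b # xs) - 1] = 0 # map Suc [0..<length (b # xs) - 1]"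
    by (simp add: upt_conv_Cons map_Suc_upt del: upt_Suc)
  then show ?thesis
    unfolding edge_lengths_def nat_dist_def by (simp only: list.map map_map comp_def nth_Cons_Suc
        nth_Cons_0 mset.simps)
qed

lemma edge_lengths_append:
  assumes "xs \<noteq> []" "ys \<noteq> []"
  shows "edge_lengths (xs @ ys) = edge_lengths xs + edge_lengths ys + {#nat_dist (last xs) (hd ys)#}"
  using assms
proof (induction xs rule: induct_list012)
  case (3 a b xs)
  then show ?case by simp
qed (auto simp: neq_Nil_conv)

lemma edge_lengths_append_overlap:
  "edge_lengths (xs @ a # ys) = edge_lengths (xs @ [a]) + edge_lengths (a # ys)"
  by (cases "xs = []") (simp_all add: edge_lengths_append[of xs "a # ys"] edge_lengths_append[of xs "[a]"])

lemma edge_lengths_rev: "edge_lengths (rev xs) = edge_lengths xs"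
proof (induction xs rule: induct_list012)
  case (3 a b xs)
  then show ?case
    using edge_lengths_append[of "rev xs @ [b]" "[a]"] by (simp add: nat_dist_commute)
qed simp_all

lemma edge_lengths_shift: "edge_lengths (map (\<lambda>x. x + k) xs) = edge_lengths xs"
  by (induction xs rule: induct_list012) (simp_all add: nat_dist_def)

lemma edge_lengths_arith_prog:
  "edge_lengths (map (\<lambda>i. r + t * i) [0..<n]) = replicate_mset (n - 1) t"
proof (induction n)
  case (Suc n)
  show ?case
  proof (cases n)
    case (Suc m)
    then show ?thesis
      using Suc.IH edge_lengths_append[of "map (\<lambda>i. r + t * i) [0..<n]" "[r + t * n]"]
      by (simp add: nat_dist_def last_map del: upt_Suc) (simp add: algebra_simps)
  qed simp
qed simp

definition residue_class :: "nat \<Rightarrow> nat \<Rightarrow> nat \<Rightarrow> nat list" where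
  "residue_class t v r = filter (\<lambda>x. x mod t = r) [0..<v]"

definition class_top :: "nat \<Rightarrow> nat \<Rightarrow> nat \<Rightarrow> nat" where
  "class_top t v r = r + t * ((v - Suc r) div t)"

lemma residue_class_eq_arith_prog:
  assumes "r < t" "r < v"
  shows "residue_class t v r = map (\<lambda>i. r + t * i) [0..<Suc ((v - Suc r) div t)]"
proof (rule sorted_distinct_set_unique)
  have t: "0 < t" using assms by simp
  have below: "r + t * i < v \<longleftrightarrow> i < Suc ((v - Suc r) div t)" for i
  proof -
    have "i < Suc ((v - Suc r) div t) \<longleftrightarrow> i * t \<le> v - Suc r"
      using t by (simp add: less_Suc_eq_le less_eq_div_iff_mult_less_eq)
    then show ?thesis using assms by (simp add: mult.commute) linarith
  qed
  have "x \<in> set (residue_class t v r) \<longleftrightarrow> (\<exists>i. x = r + t * i \<and> r + t * i < v)" for x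
  proof
    assume "x \<in> set (residue_class t v r)"
    then have "x = r + t * (x div t)" "x < v"
      by (simp_all add: residue_class_def) (metis add.commute mult_div_mod_eq)
    then show "\<exists>i. x = r + t * i \<and> r + t * i < v" by metis
  qed (auto simp: residue_class_def assms)
  then show "set (residue_class t v r) = set (map (\<lambda>i. r + t * i) [0..<Suc ((v - Suc r) div t)])"
    using below by (auto simp del: upt_Suc intro!: imageI)
  show "sorted (map (\<lambda>i. r + t * i) [0..<Suc ((v - Suc r) div t)])"
    by (simp add: sorted_iff_nth_mono del: upt_Suc)
  show "distinct (map (\<lambda>i. r + t * i) [0..<Suc ((v - Suc r) div t)])"
    using t by (simp add: distinct_map inj_on_def del: upt_Suc)
qed (simp_all add: residue_class_def sorted_wrt_filter)

lemma
  assumes "r < t" "t \<le> v"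
  shows residue_class_nonempty: "residue_class t v r \<noteq> []"
    and hd_residue_class: "hd (residue_class t v r) = r"
    and last_residue_class: "last (residue_class t v r) = class_top t v r"
    and edge_lengths_residue_class:
      "edge_lengths (residue_class t v r) = replicate_mset (length (residue_class t v r) - 1) t"
proof -
  define n where "n = (v - Suc r) div t"
  have eq: "residue_class t v r = map (\<lambda>i. r + t * i) [0..<Suc n]"
    unfolding n_def using assms by (intro residue_class_eq_arith_prog) simp_all
  show "residue_class t v r \<noteq> []" "hd (residue_class t v r) = r"
    unfolding eq by (simp_all add: hd_map del: upt_Suc)
  show "last (residue_class t v r) = class_top t v r"
    unfolding eq by (simp add: last_map class_top_def n_def del: upt_Suc)
  show "edge_lengths (residue_class t v r) = replicate_mset (length (residue_class t v r) - 1) t"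
    unfolding eq by (simp only: edge_lengths_arith_prog length_map length_upt diff_zero)
qed

lemma class_top_eq:
  assumes "r < t" "t \<le> v"
  shows "class_top t v r = r + t * (v div t - 1) + (if r < v mod t then t else 0)"
proof -
  define q where "q = v div t - 1"
  define w where "w = v mod t"
  have "0 < v div t" using assms by (simp add: div_greater_zero_iff)
  then have v: "v = t * q + t + w"
    unfolding q_def w_def by (metis Suc_diff_1 add.commute mult_Suc_right mult_div_mod_eq)
  have "w < t" using assms by (simp add: w_def)
  have "(v - Suc r) div t = (if r < w then Suc q else q)"
  proof (intro div_nat_eqI)
    show "t * (if r < w then Suc q else q) \<le> v - Suc r"
      using v assms(1) by auto
    show "v - Suc r < t * Suc (if r < w then Suc q else q)"
      using v \<open>w < t\<close> by auto
  qed
  then show ?thesis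
    by (simp add: class_top_def q_def w_def)
qed

lemma class_top_gap_same_side:
  assumes "a < t" "b < t" "t \<le> v" "a < v mod t \<longleftrightarrow> b < v mod t"
  shows "nat_dist (class_top t v a) (class_top t v b) = nat_dist a b"
  using assms by (simp add: class_top_eq nat_dist_def)

lemma class_top_gap_across:
  assumes "b < v mod t" "v mod t \<le> a" "a < t" "t \<le> v"
  shows "nat_dist (class_top t v a) (class_top t v b) = t + b - a"
  using assms by (simp add: class_top_eq nat_dist_def)

(* snake t v up R runs through the classes listed in R, the first one upwards iff up; the edge
   from class r to the next class r' has length join_length t v up r r'. *)
fun snake :: "nat \<Rightarrow> nat \<Rightarrow> bool \<Rightarrow> nat list \<Rightarrow> nat list" where
  "snake t v up [] = []"
| "snake t v up (r # R) =
     (if up then residue_class t v r else rev (residue_class t v r)) @ snake t v (\<not> up) R"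

definition join_length :: "nat \<Rightarrow> nat \<Rightarrow> bool \<Rightarrow> nat \<Rightarrow> nat \<Rightarrow> nat" where
  "join_length t v up r r' =
     (if up then nat_dist (class_top t v r) (class_top t v r') else nat_dist r r')"

definition joins_two :: "nat \<Rightarrow> nat \<Rightarrow> bool \<Rightarrow> nat list \<Rightarrow> bool" where
  "joins_two t v up R \<longleftrightarrow>
     (\<forall>j. Suc j < length R \<longrightarrow> join_length t v (up = even j) (R ! j) (R ! Suc j) = 2)"

lemma joins_two_Cons_Cons:
  "joins_two t v up (r # r' # R) \<longleftrightarrow>
     join_length t v up r r' = 2 \<and> joins_two t v (\<not> up) (r' # R)"
proof -
  have parity: "((\<not> up) = even j) = (up = odd j)" for j by auto
  show ?thesis unfolding joins_two_def by (simp add: All_less_Suc2 parity)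
qed

context
  fixes t v :: nat
  assumes t_le_v: "t \<le> v"
begin

lemma snake_nonempty: "R \<noteq> [] \<Longrightarrow> set R \<subseteq> {..<t} \<Longrightarrow> snake t v up R \<noteq> []"
  by (cases R) (simp_all add: residue_class_nonempty t_le_v)

lemma hd_snake:
  "R \<noteq> [] \<Longrightarrow> set R \<subseteq> {..<t} \<Longrightarrow>
     hd (snake t v up R) = (if up then hd R else class_top t v (hd R))"
  by (cases R) (simp_all add: residue_class_nonempty hd_residue_class last_residue_class hd_rev t_le_v)

lemma last_snake:
  "R \<noteq> [] \<Longrightarrow> set R \<subseteq> {..<t} \<Longrightarrow>
     last (snake t v up R) = (if up = odd (length R) then class_top t v (last R) else last R)"
proof (induction R arbitrary: up)
  case (Cons r R)
  show ?case
  proof (cases "R = []")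
    case True
    then show ?thesis
      using Cons.prems by (simp add: residue_class_nonempty hd_residue_class last_residue_class last_rev t_le_v)
  next
    case False
    then show ?thesis
      using Cons.prems Cons.IH[of "\<not> up"] snake_nonempty[of R "\<not> up"] by simp
  qed
qed simp

lemma length_snake_ge: "set R \<subseteq> {..<t} \<Longrightarrow> length R \<le> length (snake t v up R)"
proof (induction R arbitrary: up)
  case (Cons r R)
  have "0 < length (residue_class t v r)"
    using Cons.prems residue_class_nonempty[of r t v] t_le_v by simp
  moreover have "length R \<le> length (snake t v (\<not> up) R)"
    using Cons by simp
  ultimately show ?case by (cases up) (simp_all del: length_greater_0_conv)
qed simp

lemma edge_lengths_snake:
  assumes "set R \<subseteq> {..<t}" "joins_two t v up R"
  shows "edge_lengths (snake t v up R) =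
    replicate_mset (length (snake t v up R) - length R) t + replicate_mset (length R - 1) 2"
  using assms
proof (induction R arbitrary: up)
  case (Cons r R)
  define C where "C = (if up then residue_class t v r else rev (residue_class t v r))"
  define S where "S = snake t v (\<not> up) R"
  have r: "r < t" and R: "set R \<subseteq> {..<t}" using Cons.prems by auto
  have C: "C \<noteq> []" "edge_lengths C = replicate_mset (length C - 1) t"
    using r t_le_v by (simp_all add: C_def residue_class_nonempty edge_lengths_rev edge_lengths_residue_class)
  show ?case
  proof (cases R)
    case Nil
    then show ?thesis using C by (simp add: C_def)
  next
    case (Cons r' R')
    have join: "join_length t v up r r' = 2" and joins: "joins_two t v (\<not> up) R"
      using Cons.prems(2) \<open>R = r' # R'\<close> by (simp_all add: joins_two_Cons_Cons)
    have "R \<noteq> []" "hd R = r'" using \<open>R = r' # R'\<close> by simp_all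
    then have "hd S = (if up then class_top t v r' else r')"
      using hd_snake[OF _ R, of "\<not> up"] unfolding S_def by simp
    then have "nat_dist (last C) (hd S) = 2"
      using r t_le_v join
      by (simp add: C_def join_length_def last_rev hd_residue_class last_residue_class split: if_splits)
    have IH: "edge_lengths S = replicate_mset (length S - length R) t + replicate_mset (length R - 1) 2"
      unfolding S_def using Cons.IH R joins by blast
    have "length R \<le> length S" "S \<noteq> []"
      using length_snake_ge[OF R] snake_nonempty[OF \<open>R \<noteq> []\<close> R] by (simp_all add: S_def)
    have "edge_lengths (C @ S) = edge_lengths C + edge_lengths S + {#2#}"
      using C(1) \<open>S \<noteq> []\<close> \<open>nat_dist (last C) (hd S) = 2\<close> by (simp add: edge_lengths_append)
    also have "\<dots> = replicate_mset ((length C - 1) + (length S - length R)) t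
        + replicate_mset (Suc (length R - 1)) 2"
      unfolding C(2) IH replicate_mset_add by simp
    also have "\<dots> = replicate_mset (length (C @ S) - length (r # R)) t
        + replicate_mset (length (r # R) - 1) 2"
      using C(1) \<open>R \<noteq> []\<close> \<open>length R \<le> length S\<close> by (cases C) auto
    finally show ?thesis by (simp add: C_def S_def)
  qed
qed simp

lemma mset_snake:
  "distinct R \<Longrightarrow> mset (snake t v up R) = filter_mset (\<lambda>x. x mod t \<in> set R) (mset [0..<v])"
proof (induction R arbitrary: up)
  case (Cons r R)
  then show ?case
    by (auto simp: residue_class_def multiset_eq_iff simp del: mset_upt)
qed simp

end

fun zigzag :: "nat \<Rightarrow> nat list" where
  "zigzag 0 = [0, 1]"
| "zigzag (Suc k) = rev (zigzag k) @ [Suc (Suc k)]"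

lemma zigzag_nonempty [simp]: "zigzag k \<noteq> []"
  by (cases k) simp_all

lemma zigzag_shape: "\<exists>M. zigzag k = k # M @ [Suc k]"
proof (induction k)
  case (Suc k)
  then obtain M where "zigzag k = k # M @ [Suc k]" by blast
  then show ?case by (intro exI[of _ "rev M @ [k]"]) simp
qed simp

lemma mset_zigzag: "mset (zigzag k) = mset [0..<k + 2]"
  by (induction k) simp_all

lemma edge_lengths_zigzag: "edge_lengths (zigzag k) = add_mset 1 (replicate_mset k 2)"
proof (induction k)
  case (Suc k)
  have "last (rev (zigzag k)) = k" using zigzag_shape[of k] by auto
  then show ?case
    using Suc.IH by (simp add: edge_lengths_append edge_lengths_rev nat_dist_def)
qed (simp add: nat_dist_def)

lemma glue_with_zigzag:
  assumes AB: "mset A + mset B = mset [0..<v]"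
    and "A \<noteq> []" "B \<noteq> []" "last A = 0" "hd B = 1"
  shows "\<exists>P. mset P = mset [0..<v + k] \<and>
    edge_lengths P = edge_lengths A + edge_lengths B + add_mset 1 (replicate_mset k 2)"
proof -
  obtain A0 where A: "A = A0 @ [0]"
    using assms(2,4) append_butlast_last_id by metis
  obtain B0 where B: "B = 1 # B0"
    using assms(3,5) list.collapse by metis
  obtain M where Z: "zigzag k = k # M @ [Suc k]"
    using zigzag_shape by blast
  define A' where "A' = map (\<lambda>x. x + k) A0"
  define B' where "B' = map (\<lambda>x. x + k) B0"
  define P where "P = A' @ zigzag k @ B'"
  have "edge_lengths P = edge_lengths (A' @ [k]) + edge_lengths ((k # M) @ Suc k # B')"
    unfolding P_def Z using edge_lengths_append_overlap[of A' k "M @ Suc k # B'"] by simp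
  also have "\<dots> = edge_lengths (A' @ [k]) + edge_lengths (zigzag k) + edge_lengths (Suc k # B')"
    unfolding Z using edge_lengths_append_overlap[of "k # M" "Suc k" B'] by simp
  also have "\<dots> = edge_lengths A + edge_lengths B + add_mset 1 (replicate_mset k 2)"
    using edge_lengths_shift[of k A] edge_lengths_shift[of k B]
    by (simp add: A B A'_def B'_def edge_lengths_zigzag)
  finally have "edge_lengths P = edge_lengths A + edge_lengths B + add_mset 1 (replicate_mset k 2)" .
  moreover have "mset P = mset [0..<v + k]"
  proof -
    have "mset P = image_mset (\<lambda>x. x + k) (mset A + mset B) + mset (zigzag k) - {#k, Suc k#}"
      by (simp add: P_def A B A'_def B'_def Z)
    also have "\<dots> = mset [k..<v + k] + mset [0..<k]"
      by (simp add: AB mset_zigzag map_add_upt[symmetric] del: mset_upt)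
    also have "\<dots> = mset [0..<v + k]"
      by (simp add: upt_add_eq_append[of 0 k v] add.commute del: mset_upt)
    finally show ?thesis .
  qed
  ultimately show ?thesis by blast
qed

lemma snake_pair_from_orders:
  assumes "t \<le> v"
    and "distinct RE" "set RE \<subseteq> {r. r < t \<and> even r}"
    and "distinct RO" "set RO \<subseteq> {r. r < t \<and> odd r}"
    and len: "length RE + length RO = t"
    and "RE \<noteq> []" "RO \<noteq> []" "even (length RE)" "last RE = 0" "hd RO = 1"
    and "joins_two t v True RE" "joins_two t v True RO"
  shows "\<exists>A B. mset A + mset B = mset [0..<v] \<and> A \<noteq> [] \<and> B \<noteq> [] \<and> last A = 0 \<and> hd B = 1 \<and>
    edge_lengths A + edge_lengths B = replicate_mset (v - t) t + replicate_mset (t - 2) 2"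
proof -
  define A where "A = snake t v True RE"
  define B where "B = snake t v True RO"
  have RE: "set RE \<subseteq> {..<t}" and RO: "set RO \<subseteq> {..<t}" using assms(3,5) by auto
  have distinct: "distinct (RE @ RO)" using assms(2-5) by auto
  have "0 < t" using RE \<open>RE \<noteq> []\<close> by (cases RE) auto
  have "set (RE @ RO) = {..<t}"
    using RE RO len distinct_card[OF distinct] by (intro card_subset_eq) auto
  then have "x mod t \<in> set RE \<or> x mod t \<in> set RO" "\<not> (x mod t \<in> set RE \<and> x mod t \<in> set RO)" for x
    using \<open>0 < t\<close> distinct by auto
  then have AB: "mset A + mset B = mset [0..<v]"
    unfolding A_def B_def using distinct
    by (auto simp: mset_snake[OF \<open>t \<le> v\<close>] multiset_eq_iff simp del: mset_upt)
  have "length A + length B = v"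
    using arg_cong[OF AB, of size] by simp
  moreover have "length RE \<le> length A" "length RO \<le> length B"
    unfolding A_def B_def using length_snake_ge[OF \<open>t \<le> v\<close>] RE RO by blast+
  ultimately have "v - t = (length A - length RE) + (length B - length RO)"
    "t - 2 = (length RE - 1) + (length RO - 1)"
    using len \<open>RE \<noteq> []\<close> \<open>RO \<noteq> []\<close> by (simp_all add: Suc_le_eq)
  moreover have
    "edge_lengths A = replicate_mset (length A - length RE) t + replicate_mset (length RE - 1) 2"
    "edge_lengths B = replicate_mset (length B - length RO) t + replicate_mset (length RO - 1) 2"
    unfolding A_def B_def using edge_lengths_snake[OF \<open>t \<le> v\<close>] RE RO assms(12,13) by blast+
  ultimately have "edge_lengths A + edge_lengths B = replicate_mset (v - t) t + replicate_mset (t - 2) 2"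
    by (simp add: replicate_mset_add ac_simps)
  moreover have "A \<noteq> []" "B \<noteq> []" "last A = 0" "hd B = 1"
    unfolding A_def B_def using assms(7-11) RE RO
    by (simp_all add: snake_nonempty[OF \<open>t \<le> v\<close>] last_snake[OF \<open>t \<le> v\<close>] hd_snake[OF \<open>t \<le> v\<close>])
  ultimately show ?thesis using AB by blast
qed

lemma join_length_same_side:
  assumes "a < t" "b < t" "t \<le> v" "nat_dist a b = 2" "up \<longrightarrow> (a < v mod t \<longleftrightarrow> b < v mod t)"
  shows "join_length t v up a b = 2"
  using assms class_top_gap_same_side by (simp add: join_length_def)

lemma join_length_across:
  assumes "b < v mod t" "v mod t \<le> a" "a + 2 = t + b" "a < t" "t \<le> v"
  shows "join_length t v True a b = 2"
  using assms class_top_gap_across by (simp add: join_length_def)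

lemma join_length_commute: "join_length t v up a b = join_length t v up b a"
  by (simp add: join_length_def nat_dist_commute)

lemma joins_two_map_upt:
  "joins_two t v up (map f [0..<n]) \<longleftrightarrow>
     (\<forall>j. Suc j < n \<longrightarrow> join_length t v (up = even j) (f j) (f (Suc j)) = 2)"
  by (simp add: joins_two_def)

(* Orders of the even and of the odd residues for v mod t = 1 (mod 4) and for v mod t = 3 (mod 4):
   2, 4, ..., t - 2, 0 and 1, 3, ..., t - 1, resp. t - 2, t - 4, ..., 0 and 1, t - 1, t - 3, ..., 3. *)
definition evens_rotated :: "nat \<Rightarrow> nat list" where
  "evens_rotated t = map (\<lambda>j. if j = t div 2 - 1 then 0 else 2 * j + 2) [0..<t div 2]"

definition odds_ascending :: "nat \<Rightarrow> nat list" where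
  "odds_ascending t = map (\<lambda>j. 2 * j + 1) [0..<t div 2]"

definition evens_descending :: "nat \<Rightarrow> nat list" where
  "evens_descending t = map (\<lambda>j. t - 2 - 2 * j) [0..<t div 2]"

definition odds_wrapped :: "nat \<Rightarrow> nat list" where
  "odds_wrapped t = map (\<lambda>j. if j = 0 then 1 else t + 1 - 2 * j) [0..<t div 2]"

lemma joins_two_evens_rotated:
  assumes "t mod 4 = 0" "t \<le> v" "v mod t mod 4 = 1"
  shows "joins_two t v True (evens_rotated t)"
  unfolding evens_rotated_def joins_two_map_upt
proof (intro allI impI)
  fix j assume j: "Suc j < t div 2"
  obtain p where w: "v mod t = 4 * p + 1"
    using div_mult_mod_eq[of "v mod t" 4] assms(3) by (metis mult.commute)
  show "join_length t v (True = even j) (if j = t div 2 - 1 then 0 else 2 * j + 2)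
      (if Suc j = t div 2 - 1 then 0 else 2 * Suc j + 2) = 2"
  proof (cases "Suc j = t div 2 - 1")
    case True
    then have t: "t = 2 * j + 4" "even j" using assms(1) by presburger+
    moreover have "4 * p + 1 < t" using w t by (metis mod_less_divisor add_gr_0 zero_less_numeral)
    then have "4 * p + 1 \<le> 2 * j + 2" using t assms(1) by presburger
    ultimately have "join_length t v True (2 * j + 2) 0 = 2"
      using w assms(2) by (intro join_length_across) simp_all
    then show ?thesis using True \<open>even j\<close> by simp
  next
    case False
    have "2 * j + 2 < 4 * p + 1 \<longleftrightarrow> 2 * Suc j + 2 < 4 * p + 1" if "even j"
      using that by presburger
    moreover have "j \<noteq> t div 2 - 1" "2 * j + 4 < t" using False j by presburger+
    ultimately have "join_length t v (True = even j) (2 * j + 2) (2 * Suc j + 2) = 2"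
      using w assms(2) by (intro join_length_same_side) (simp_all add: nat_dist_def)
    then show ?thesis using False \<open>j \<noteq> t div 2 - 1\<close> by simp
  qed
qed

lemma joins_two_odds_ascending:
  assumes "t mod 4 = 0" "t \<le> v" "v mod t mod 4 = 1"
  shows "joins_two t v True (odds_ascending t)"
  unfolding odds_ascending_def joins_two_map_upt
proof (intro allI impI)
  fix j assume j: "Suc j < t div 2"
  obtain p where w: "v mod t = 4 * p + 1"
    using div_mult_mod_eq[of "v mod t" 4] assms(3) by (metis mult.commute)
  have "2 * j + 1 < 4 * p + 1 \<longleftrightarrow> 2 * Suc j + 1 < 4 * p + 1" if "even j"
    using that by presburger
  then show "join_length t v (True = even j) (2 * j + 1) (2 * Suc j + 1) = 2"
    using j w assms(2) by (intro join_length_same_side) (simp_all add: nat_dist_def)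
qed

lemma joins_two_evens_descending:
  assumes "t mod 4 = 0" "t \<le> v" "v mod t mod 4 = 3"
  shows "joins_two t v True (evens_descending t)"
  unfolding evens_descending_def joins_two_map_upt
proof (intro allI impI)
  fix j assume j: "Suc j < t div 2"
  obtain p where w: "v mod t = 4 * p + 3"
    using div_mult_mod_eq[of "v mod t" 4] assms(3) by (metis mult.commute)
  obtain d where d: "t = 2 * j + 4 + d"
    using j le_Suc_ex[of "2 * j + 4" t] by fastforce
  have "d + 2 < 4 * p + 3 \<longleftrightarrow> d < 4 * p + 3" if "even j"
    using that d assms(1) by presburger
  then have "join_length t v (True = even j) (d + 2) d = 2"
    using d assms(2) w by (intro join_length_same_side) (simp_all add: nat_dist_def)
  moreover have "t - 2 - 2 * j = d + 2" "t - 2 - 2 * Suc j = d" using d by simp_all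
  ultimately show "join_length t v (True = even j) (t - 2 - 2 * j) (t - 2 - 2 * Suc j) = 2"
    by simp
qed

lemma joins_two_odds_wrapped:
  assumes "t mod 4 = 0" "t \<le> v" "v mod t mod 4 = 3"
  shows "joins_two t v True (odds_wrapped t)"
  unfolding odds_wrapped_def joins_two_map_upt
proof (intro allI impI)
  fix j assume j: "Suc j < t div 2"
  obtain p where w: "v mod t = 4 * p + 3"
    using div_mult_mod_eq[of "v mod t" 4] assms(3) by (metis mult.commute)
  obtain d where d: "t = 2 * j + 4 + d"
    using j le_Suc_ex[of "2 * j + 4" t] by fastforce
  show "join_length t v (True = even j) (if j = 0 then 1 else t + 1 - 2 * j)
      (if Suc j = 0 then 1 else t + 1 - 2 * Suc j) = 2"
  proof (cases "j = 0")
    case True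
    have "4 * p + 3 < t" using w d by (metis mod_less_divisor add_gr_0 zero_less_numeral)
    then have "join_length t v True (t - 1) 1 = 2"
      using w assms(2) by (intro join_length_across) simp_all
    then show ?thesis using True d join_length_commute by simp
  next
    case False
    have "d + 5 < 4 * p + 3 \<longleftrightarrow> d + 3 < 4 * p + 3" if "even j"
      using that d assms(1) by presburger
    then have "join_length t v (True = even j) (d + 5) (d + 3) = 2"
      using False d assms(2) w by (intro join_length_same_side) (simp_all add: nat_dist_def)
    moreover have "t + 1 - 2 * j = d + 5" "t + 1 - 2 * Suc j = d + 3" using d by simp_all
    ultimately show ?thesis using False by simp
  qed
qed

lemma evens_rotated_basics:
  assumes "even t" "0 < t"
  shows "distinct (evens_rotated t)" "set (evens_rotated t) \<subseteq> {r. r < t \<and> even r}"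
    "length (evens_rotated t) = t div 2" "last (evens_rotated t) = 0"
  using assms by (auto simp: evens_rotated_def distinct_map inj_on_def last_map)

lemma odds_ascending_basics:
  assumes "even t" "0 < t"
  shows "distinct (odds_ascending t)" "set (odds_ascending t) \<subseteq> {r. r < t \<and> odd r}"
    "length (odds_ascending t) = t div 2" "hd (odds_ascending t) = 1"
  using assms by (auto simp: odds_ascending_def distinct_map inj_on_def hd_map)

lemma evens_descending_basics:
  assumes "even t" "0 < t"
  shows "distinct (evens_descending t)" "set (evens_descending t) \<subseteq> {r. r < t \<and> even r}"
    "length (evens_descending t) = t div 2" "last (evens_descending t) = 0"
  using assms by (auto simp: evens_descending_def distinct_map inj_on_def last_map)

lemma odds_wrapped_basics:
  assumes "even t" "0 < t"
  shows "distinct (odds_wrapped t)" "set (odds_wrapped t) \<subseteq> {r. r < t \<and> odd r}"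
    "length (odds_wrapped t) = t div 2" "hd (odds_wrapped t) = 1"
  using assms by (auto simp: odds_wrapped_def distinct_map inj_on_def hd_map)

lemma snake_pair_exists:
  assumes "t mod 4 = 0" "4 \<le> t" "t \<le> v" "odd (v mod t)"
  shows "\<exists>A B. mset A + mset B = mset [0..<v] \<and> A \<noteq> [] \<and> B \<noteq> [] \<and> last A = 0 \<and> hd B = 1 \<and>
    edge_lengths A + edge_lengths B = replicate_mset (v - t) t + replicate_mset (t - 2) 2"
proof -
  have t: "even t" "0 < t" "even (t div 2)" "t div 2 + t div 2 = t" "t div 2 \<noteq> 0"
    using assms(1,2) by presburger+
  have "w mod 4 = 1 \<or> w mod 4 = 3" if "odd w" for w :: nat
    using that by presburger
  then have "v mod t mod 4 = 1 \<or> v mod t mod 4 = 3" using assms(4) by blast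
  then show ?thesis
  proof
    assume w: "v mod t mod 4 = 1"
    note E = evens_rotated_basics[OF t(1,2)] and O = odds_ascending_basics[OF t(1,2)]
    show ?thesis
    proof (rule snake_pair_from_orders[OF assms(3) E(1,2) O(1,2)])
      show "joins_two t v True (evens_rotated t)" by (rule joins_two_evens_rotated[OF assms(1,3) w])
      show "joins_two t v True (odds_ascending t)" by (rule joins_two_odds_ascending[OF assms(1,3) w])
    qed (use E(3,4) O(3,4) t in \<open>auto simp flip: length_greater_0_conv\<close>)
  next
    assume w: "v mod t mod 4 = 3"
    note E = evens_descending_basics[OF t(1,2)] and O = odds_wrapped_basics[OF t(1,2)]
    show ?thesis
    proof (rule snake_pair_from_orders[OF assms(3) E(1,2) O(1,2)])
      show "joins_two t v True (evens_descending t)" by (rule joins_two_evens_descending[OF assms(1,3) w])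
      show "joins_two t v True (odds_wrapped t)" by (rule joins_two_odds_wrapped[OF assms(1,3) w])
    qed (use E(3,4) O(3,4) t in \<open>auto simp flip: length_greater_0_conv\<close>)
  qed
qed

lemma has_linear_realizationI:
  assumes "mset xs = mset [0..<size L + 1]" "edge_lengths xs = L" "\<forall>l \<in># L. 0 < l \<and> l \<le> size L"
  shows "has_linear_realization L"
proof -
  have "distinct xs" "set xs = {0..<size L + 1}"
    using mset_eq_imp_distinct_iff[OF assms(1)] mset_eq_setD[OF assms(1)] by (simp_all del: upt_Suc)
  then show ?thesis
    unfolding has_linear_realization_def linear_realization_def ham_path_def Let_def
    using assms(2,3) by auto
qed

theorem proposition3p10:
  fixes t b c :: nat
  assumes "t \<ge> 4" and "t mod 4 = 0"
    and "b \<ge> t - 2" and "c > 0" and "odd c"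
  shows "has_linear_realization (ms_1_2_t b t c)"
proof -
  have "c mod t mod 2 = c mod 2"
    using assms(2) by (intro mod_mod_cancel) presburger
  then have "odd ((t + c) mod t)"
    using assms(5) by (simp add: odd_iff_mod_2_eq_one)
  then obtain A B where AB: "mset A + mset B = mset [0..<t + c]" "A \<noteq> []" "B \<noteq> []" "last A = 0" "hd B = 1"
    and edges: "edge_lengths A + edge_lengths B = replicate_mset c t + replicate_mset (t - 2) 2"
    using snake_pair_exists[of t "t + c"] assms by auto
  obtain P where mset_P: "mset P = mset [0..<t + c + (b - (t - 2))]"
    and edges_P: "edge_lengths P = edge_lengths A + edge_lengths B + add_mset 1 (replicate_mset (b - (t - 2)) 2)"
    using glue_with_zigzag[OF AB] by blast
  have size: "t + c + (b - (t - 2)) = size (ms_1_2_t b t c) + 1"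
    using assms by (simp add: ms_1_2_t_def)
  have "replicate_mset (t - 2) 2 + replicate_mset (b - (t - 2)) 2 = replicate_mset b (2::nat)"
    using assms(3) replicate_mset_add[of "t - 2" "b - (t - 2)" "2::nat"] by simp
  then have "edge_lengths P = ms_1_2_t b t c"
    using edges_P edges by (simp add: ms_1_2_t_def ac_simps)
  moreover have "\<forall>l \<in># ms_1_2_t b t c. 0 < l \<and> l \<le> size (ms_1_2_t b t c)"
    using assms by (auto simp: ms_1_2_t_def)
  ultimately show ?thesis
    using mset_P unfolding size by (rule has_linear_realizationI[rotated])
qed

end
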